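(* There exists a finite outerplanar graph $G$ such that the vertices of $G$ cannot be non-repetitively coloured using fewer than five colours; that is, every non-repetitive vertex colouring of $G$ uses at least five colours.
   Context: A finite sequence $a_1a_2\cdots a_n$ is called non-repetitive if it contains no two identical adjacent blocks, i.e. there are no $i$ and $m\ge 1$ with $i+2m-1\le n$ and $a_{i+j}=a_{i+m+j}$ for all $0\le j<m$. A vertex colouring of a graph $G$ is called non-repetitive if for every path $v_1v_2\cdots v_n$ in $G$ with distinct vertices, the sequence of colours of $v_1,\dots,v_n$ is non-repetitive. A graph is outerplanar if it has a planar embedding in which all vertices lie on the boundary of the outer face. *)

theory Defs
  imports "HOL-Analysis.Analysis"
begin

definition simple_graph :: "nat set \<Rightarrow> (nat \<Rightarrow> nat \<Rightarrow> bool) \<Rightarrow> bool" where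
  "simple_graph V E \<longleftrightarrow>
     (\<forall>u v. E u v \<longrightarrow> u \<in> V \<and> v \<in> V \<and> u \<noteq> v \<and> E v u)"

definition nonrep_seq :: "'b list \<Rightarrow> bool" where
  "nonrep_seq xs \<longleftrightarrow>
     \<not> (\<exists>i m. 1 \<le> m \<and> i + 2 * m \<le> length xs \<and>
              (\<forall>j<m. xs ! (i + j) = xs ! (i + m + j)))"

definition graph_path :: "nat set \<Rightarrow> (nat \<Rightarrow> nat \<Rightarrow> bool) \<Rightarrow> nat list \<Rightarrow> bool" where
  "graph_path V E ps \<longleftrightarrow>
     distinct ps \<and> set ps \<subseteq> V \<and> (\<forall>i. i + 1 < length ps \<longrightarrow> E (ps ! i) (ps ! (i + 1)))"

definition nonrep_colouring ::
    "nat set \<Rightarrow> (nat \<Rightarrow> nat \<Rightarrow> bool) \<Rightarrow> (nat \<Rightarrow> 'b) \<Rightarrow> bool" where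
  "nonrep_colouring V E c \<longleftrightarrow> (\<forall>ps. graph_path V E ps \<longrightarrow> nonrep_seq (map c ps))"

text \<open>The drawing is outerplanar if all vertex points lie on the
boundary of the outer (unbounded) face, i.e. the unbounded connected component of
the complement of the drawing.\<close>

definition outerplanar_embedding ::
    "nat set \<Rightarrow> (nat \<Rightarrow> nat \<Rightarrow> bool) \<Rightarrow> (nat \<Rightarrow> complex) \<Rightarrow> (nat set \<Rightarrow> real \<Rightarrow> complex) \<Rightarrow> bool"
  where
  "outerplanar_embedding V E pos \<gamma> \<longleftrightarrow>
     inj_on pos V \<and>
     (\<forall>u v. E u v \<longrightarrow>
        arc (\<gamma> {u, v}) \<and>
        {pathstart (\<gamma> {u, v}), pathfinish (\<gamma> {u, v})} = {pos u, pos v} \<and>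
        path_image (\<gamma> {u, v}) \<inter> pos ` V = {pos u, pos v}) \<and>
     (\<forall>u v u' v'. E u v \<longrightarrow> E u' v' \<longrightarrow> {u, v} \<noteq> {u', v'} \<longrightarrow>
        path_image (\<gamma> {u, v}) \<inter> path_image (\<gamma> {u', v'}) \<subseteq> pos ` ({u, v} \<inter> {u', v'})) \<and>
     (let D = pos ` V \<union> \<Union> {path_image (\<gamma> {u, v}) | u v. E u v} in
        \<exists>F \<in> components (- D). \<not> bounded F \<and> pos ` V \<subseteq> frontier F)"

definition outerplanar :: "nat set \<Rightarrow> (nat \<Rightarrow> nat \<Rightarrow> bool) \<Rightarrow> bool" where
  "outerplanar V E \<longleftrightarrow> (\<exists>pos \<gamma>. outerplanar_embedding V E pos \<gamma>)"

end

theory Submission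
  imports Defs
begin

text \<open>
  The witness is the heptagon 0-1-2-3-4-5-6 triangulated by the chords 02, 26, 36 and 35.
  Putting vertex \<open>k\<close> at the point \<open>(k, k\<^sup>2)\<close> of the parabola and drawing edges as straight
  chords gives an outerplanar drawing: chords of a convex curve whose end points do not
  interleave meet only in common end points, and the whole drawing lies on or above the
  parabola, so the region below it lies in an unbounded face whose boundary contains every vertex.

  A non-repetitive colouring is proper and never colours a path \<open>a b d e\<close> with
  \<open>c a = c d\<close> and \<open>c b = c e\<close>. With only four colours, the triangle 012 forces vertex 6
  either to repeat the colour of 1 or to take the fourth colour; in both cases the colours of
  3, 5 and 4 are then forced in turn until no colour is left for vertex 4.
\<close>

definition parabola :: "real \<Rightarrow> complex" where
  "parabola x = Complex x (x\<^sup>2)"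

lemma parabola_eq_iff [simp]: "parabola x = parabola y \<longleftrightarrow> x = y"
  by (auto simp: parabola_def complex_eq_iff)

lemma closed_segment_parabola:
  assumes "z \<in> closed_segment (parabola a) (parabola b)" "a \<le> b"
  shows "a \<le> Re z \<and> Re z \<le> b \<and> Im z = (Re z)\<^sup>2 + (Re z - a) * (b - Re z)"
proof -
  obtain u where u: "0 \<le> u" "u \<le> 1" "z = (1 - u) *\<^sub>R parabola a + u *\<^sub>R parabola b"
    using assms(1) by (auto simp: closed_segment_def)
  have re: "Re z = (1 - u) * a + u * b" and im: "Im z = (1 - u) * a\<^sup>2 + u * b\<^sup>2"
    using u(3) by (auto simp: parabola_def)
  have "(1 - u) * a + u * a \<le> (1 - u) * a + u * b" "(1 - u) * a + u * b \<le> (1 - u) * b + u * b"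
    using u assms(2) by (simp_all add: mult_left_mono)
  moreover have "(1 - u) * a\<^sup>2 + u * b\<^sup>2
      = ((1 - u) * a + u * b)\<^sup>2 + ((1 - u) * a + u * b - a) * (b - ((1 - u) * a + u * b))"
    by (simp add: algebra_simps power2_eq_square)
  ultimately show ?thesis
    unfolding re im by (simp add: algebra_simps)
qed

lemma closed_segment_parabola_above:
  assumes "z \<in> closed_segment (parabola a) (parabola b)" "a \<le> b"
  shows "(Re z)\<^sup>2 \<le> Im z"
  using closed_segment_parabola[OF assms] by simp

lemma parabola_in_closed_segment:
  assumes "parabola x \<in> closed_segment (parabola a) (parabola b)" "a \<le> b"
  shows "x = a \<or> x = b"
  using closed_segment_parabola[OF assms] by (auto simp: parabola_def)

lemma closed_segment_Int_parabola_image: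
  assumes "a \<le> b" "a \<in> X" "b \<in> X"
  shows "closed_segment (parabola a) (parabola b) \<inter> parabola ` X = {parabola a, parabola b}"
  using parabola_in_closed_segment[OF _ assms(1)] assms by auto

lemma nested_interval_products_eq:
  fixes a b c d x :: real
  assumes "a \<le> c" "d \<le> b" "c \<le> x" "x \<le> d" "(a, b) \<noteq> (c, d)"
    and eq: "(x - a) * (b - x) = (x - c) * (d - x)"
  shows "(x = a \<or> x = b) \<and> (x = c \<or> x = d)"
proof -
  have "x = c \<or> x = d"
  proof (rule ccontr)
    assume "\<not> (x = c \<or> x = d)"
    with assms(3,4) have pos: "0 < x - c" "0 < d - x"
      by auto
    have "(x - c) * (d - x) \<le> (x - c) * (b - x)"
      by (rule mult_left_mono) (use assms pos in auto)
    moreover have "(x - c) * (b - x) \<le> (x - a) * (b - x)"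
      by (rule mult_right_mono) (use assms in auto)
    moreover have "(x - c) * (d - x) < (x - c) * (b - x) \<or> (x - c) * (b - x) < (x - a) * (b - x)"
    proof -
      have "d < b \<or> a < c"
        using assms by auto
      moreover have "(x - c) * (d - x) < (x - c) * (b - x)" if "d < b"
        by (rule mult_strict_left_mono) (use that pos in auto)
      moreover have "(x - c) * (b - x) < (x - a) * (b - x)" if "a < c"
        by (rule mult_strict_right_mono) (use that pos assms in auto)
      ultimately show ?thesis
        by blast
    qed
    ultimately show False
      using eq by linarith
  qed
  with eq show ?thesis
    by auto
qed

lemma parabola_chords_meet_at_endpoints:
  fixes a b c d :: real
  assumes "a < b" "c < d" "(a, b) \<noteq> (c, d)"
    and "\<not> (a < c \<and> c < b \<and> b < d)" "\<not> (c < a \<and> a < d \<and> d < b)"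
  shows "closed_segment (parabola a) (parabola b) \<inter> closed_segment (parabola c) (parabola d)
           \<subseteq> parabola ` ({a, b} \<inter> {c, d})"
proof
  fix z
  assume z: "z \<in> closed_segment (parabola a) (parabola b) \<inter> closed_segment (parabola c) (parabola d)"
  define x where "x = Re z"
  have ab: "a \<le> x" "x \<le> b" "Im z = x\<^sup>2 + (x - a) * (b - x)"
    using closed_segment_parabola[of z a b] z assms(1) by (auto simp: x_def)
  have cd: "c \<le> x" "x \<le> d" "Im z = x\<^sup>2 + (x - c) * (d - x)"
    using closed_segment_parabola[of z c d] z assms(2) by (auto simp: x_def)
  have eq: "(x - a) * (b - x) = (x - c) * (d - x)"
    using ab(3) cd(3) by simp
  have "(x = a \<or> x = b) \<and> (x = c \<or> x = d)"
  proof -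
    consider "b \<le> c" | "d \<le> a" | "a \<le> c \<and> d \<le> b" | "c \<le> a \<and> b \<le> d"
      using assms(4,5) by linarith
    then show ?thesis
    proof cases
      case 3
      then show ?thesis
        using nested_interval_products_eq[OF _ _ cd(1,2) assms(3) eq] by blast
    next
      case 4
      then show ?thesis
        using nested_interval_products_eq[OF _ _ ab(1,2) _ eq[symmetric]] assms(3) by auto
    qed (use ab cd in auto)
  qed
  then have "x \<in> {a, b} \<inter> {c, d}" "Im z = x\<^sup>2"
    using ab(3) by auto
  then show "z \<in> parabola ` ({a, b} \<inter> {c, d})"
    by (metis complex_eq_iff imageI parabola_def x_def complex.sel)
qed

lemma not_bounded_lower_halfplane: "\<not> bounded {z :: complex. Im z < 0}"
proof
  assume "bounded {z :: complex. Im z < 0}"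
  then obtain B where B: "\<And>z. Im z < 0 \<Longrightarrow> norm z \<le> B"
    by (auto simp: bounded_iff)
  have "norm (Complex 0 (- (\<bar>B\<bar> + 1))) \<le> B"
    by (rule B) simp
  then show False
    by (simp add: norm_complex_def)
qed

lemma connected_ray_below: "connected {z. Re z = x \<and> Im z < y}"
proof -
  have "{z. Re z = x \<and> Im z < y} = {z. Re z \<ge> x} \<inter> {z. Re z \<le> x} \<inter> {z. Im z < y}"
    by auto
  then show ?thesis
    by (metis convex_connected convex_Int convex_halfspace_Im_lt
        convex_halfspace_Re_ge convex_halfspace_Re_le)
qed

lemma closure_ray_below: "Complex x y \<in> closure {z. Re z = x \<and> Im z < y}"
proof (subst closure_approachable, intro allI impI)
  fix e :: real
  assume "e > 0"
  then have "Complex x (y - e / 2) \<in> {z. Re z = x \<and> Im z < y}"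
    and "dist (Complex x (y - e / 2)) (Complex x y) < e"
    by (simp_all add: dist_norm norm_complex_def)
  then show "\<exists>w\<in>{z. Re z = x \<and> Im z < y}. dist w (Complex x y) < e"
    by blast
qed

lemma unbounded_component_below_parabola:
  assumes above: "\<And>z. z \<in> D \<Longrightarrow> (Re z)\<^sup>2 \<le> Im z" and "parabola ` X \<subseteq> D"
  shows "\<exists>F \<in> components (- D). \<not> bounded F \<and> parabola ` X \<subseteq> frontier F"
proof -
  have below_outside: "S \<subseteq> - D" if "\<And>z. z \<in> S \<Longrightarrow> Im z < (Re z)\<^sup>2" for S
    using that above by (meson ComplI not_le subsetI)
  define H where "H = {z. Im z < 0}"
  define F where "F = connected_component_set (- D) (Complex 0 (-1))"
  have H_sub: "H \<subseteq> - D"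
    by (rule below_outside) (auto simp: H_def intro: less_le_trans[OF _ zero_le_power2])
  have cH: "connected H"
    unfolding H_def by (intro convex_connected convex_halfspace_Im_lt)
  have z0: "Complex 0 (-1) \<in> H"
    by (simp add: H_def)
  have "H \<subseteq> F"
    unfolding F_def by (rule connected_component_maximal[OF z0 cH H_sub])
  then have "\<not> bounded F"
    using not_bounded_lower_halfplane bounded_subset unfolding H_def by blast
  have F_comp: "F \<in> components (- D)"
    unfolding F_def using z0 H_sub by (intro componentsI) auto
  moreover have "parabola x \<in> frontier F" if "x \<in> X" for x
  proof -
    define L where "L = {z. Re z = x \<and> Im z < x\<^sup>2}"
    have L_sub: "L \<subseteq> - D"
      by (rule below_outside) (simp add: L_def)
    have "Complex x (-1) \<in> H \<inter> L"
      by (simp add: H_def L_def) (use zero_le_power2[of x] in linarith)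
    then have "connected (H \<union> L)"
      using cH connected_ray_below unfolding L_def by (intro connected_Un) auto
    then have "H \<union> L \<subseteq> F"
      unfolding F_def using z0 H_sub L_sub by (intro connected_component_maximal) auto
    then have "parabola x \<in> closure F"
      using closure_ray_below[of x "x\<^sup>2"] closure_mono unfolding L_def parabola_def by blast
    moreover have "parabola x \<notin> interior F"
      using interior_subset F_comp in_components_subset assms(2) that by blast
    ultimately show ?thesis
      by (simp add: frontier_def)
  qed
  ultimately show ?thesis
    using \<open>\<not> bounded F\<close> by blast
qed

lemma simple_graph_edge_ordered:
  assumes "simple_graph V E" "E u v"
  obtains a b where "a < b" "E a b" "{u, v} = {a, b}"
proof (cases "u < v")
  case True
  then show ?thesis
    using that assms(2) by blast
next
  case False
  with assms have "v < u" "E v u"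
    unfolding simple_graph_def by (metis linorder_neqE_nat)+
  then show ?thesis
    using that by blast
qed

definition parabola_chord :: "nat set \<Rightarrow> real \<Rightarrow> complex" where
  "parabola_chord S = linepath (parabola (Min S)) (parabola (Max S))"

lemma parabola_chord_edge:
  assumes "a < b"
  shows "parabola_chord {a, b} = linepath (parabola a) (parabola b)"
  using assms by (simp add: parabola_chord_def)

lemma parabola_chord_above:
  assumes "z \<in> path_image (parabola_chord {u, v})"
  shows "(Re z)\<^sup>2 \<le> Im z"
  using assms closed_segment_parabola_above[of z "Min {u, v}" "Max {u, v}"]
  by (simp add: parabola_chord_def)

lemma parabola_chords_Int:
  fixes a b c d :: nat
  assumes "a < b" "c < d" "{a, b} \<noteq> {c, d}"
    and "\<not> (a < c \<and> c < b \<and> b < d)" "\<not> (c < a \<and> a < d \<and> d < b)"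
  shows "path_image (parabola_chord {a, b}) \<inter> path_image (parabola_chord {c, d})
           \<subseteq> (\<lambda>k. parabola (real k)) ` ({a, b} \<inter> {c, d})"
proof -
  have "closed_segment (parabola a) (parabola b) \<inter> closed_segment (parabola c) (parabola d)
        \<subseteq> parabola ` ({real a, real b} \<inter> {real c, real d})"
    using assms by (intro parabola_chords_meet_at_endpoints) auto
  also have "\<dots> = (\<lambda>k. parabola (real k)) ` ({a, b} \<inter> {c, d})"
    by auto
  finally show ?thesis
    using assms(1,2) by (simp add: parabola_chord_edge)
qed

lemma outerplanar_if_noncrossing:
  assumes simple: "simple_graph V E"
    and noncrossing: "\<And>a b c d. E a b \<Longrightarrow> E c d \<Longrightarrow> \<not> (a < c \<and> c < b \<and> b < d)"
  shows "outerplanar V E"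
proof -
  let ?pos = "\<lambda>k. parabola (real k)"
  have pos_image: "?pos ` A = parabola ` real ` A" for A
    by auto
  have "outerplanar_embedding V E ?pos parabola_chord"
    unfolding outerplanar_embedding_def Let_def
  proof (intro conjI allI impI)
    show "inj_on ?pos V"
      by (simp add: inj_on_def)
  next
    fix u v
    assume "E u v"
    then obtain a b where ab: "a < b" "E a b" "{u, v} = {a, b}"
      by (rule simple_graph_edge_ordered[OF simple])
    have chord: "parabola_chord {u, v} = linepath (?pos a) (?pos b)"
      using ab by (simp add: parabola_chord_edge)
    have ends: "{?pos u, ?pos v} = {?pos a, ?pos b}"
      using arg_cong[OF ab(3), of "image ?pos"] by simp
    show "arc (parabola_chord {u, v})"
      unfolding chord using ab(1) by (simp add: arc_linepath)
    show "{pathstart (parabola_chord {u, v}), pathfinish (parabola_chord {u, v})} = {?pos u, ?pos v}"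
      by (simp add: chord ends)
    have "real a \<in> real ` V" "real b \<in> real ` V"
      using ab simple by (auto simp: simple_graph_def)
    then show "path_image (parabola_chord {u, v}) \<inter> ?pos ` V = {?pos u, ?pos v}"
      unfolding chord ends pos_image using ab(1)
      by (simp add: closed_segment_Int_parabola_image)
  next
    fix u v u' v'
    assume "E u v" "E u' v'" "{u, v} \<noteq> {u', v'}"
    moreover obtain a b where ab: "a < b" "E a b" "{u, v} = {a, b}"
      by (rule simple_graph_edge_ordered[OF simple \<open>E u v\<close>])
    moreover obtain c d where cd: "c < d" "E c d" "{u', v'} = {c, d}"
      by (rule simple_graph_edge_ordered[OF simple \<open>E u' v'\<close>])
    ultimately show "path_image (parabola_chord {u, v}) \<inter> path_image (parabola_chord {u', v'})
        \<subseteq> ?pos ` ({u, v} \<inter> {u', v'})"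
      using noncrossing[of a b c d] noncrossing[of c d a b] parabola_chords_Int[of a b c d] by auto
  next
    let ?D = "?pos ` V \<union> \<Union> {path_image (parabola_chord {u, v}) |u v. E u v}"
    have "(Re z)\<^sup>2 \<le> Im z" if "z \<in> ?D" for z
      using that parabola_chord_above by (auto simp: parabola_def)
    moreover have "parabola ` real ` V \<subseteq> ?D"
      by auto
    ultimately show "\<exists>F\<in>components (- ?D). \<not> bounded F \<and> ?pos ` V \<subseteq> frontier F"
      unfolding pos_image by (rule unbounded_component_below_parabola)
  qed
  then show ?thesis
    unfolding outerplanar_def by blast
qed

lemma nonrep_colouring_no_square_path:
  assumes "nonrep_colouring V E c" "graph_path V E (xs @ ys)" "length xs = length ys" "xs \<noteq> []"
  shows "map c xs \<noteq> map c ys"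
proof
  assume eq: "map c xs = map c ys"
  have "nonrep_seq (map c (xs @ ys))"
    using assms(1,2) unfolding nonrep_colouring_def by blast
  moreover have "\<forall>j<length xs. map c (xs @ ys) ! (0 + j) = map c (xs @ ys) ! (0 + length xs + j)"
    using eq assms(3) by (simp add: nth_append)
  moreover have "1 \<le> length xs" "0 + 2 * length xs \<le> length (map c (xs @ ys))"
    using assms(3,4) by (auto simp: Suc_le_eq)
  ultimately show False
    unfolding nonrep_seq_def by blast
qed

lemma nonrep_colouring_proper:
  assumes "simple_graph V E" "nonrep_colouring V E c" "E u v"
  shows "c u \<noteq> c v"
proof -
  have "graph_path V E ([u] @ [v])"
    using assms(1,3) unfolding graph_path_def simple_graph_def by auto
  from nonrep_colouring_no_square_path[OF assms(2) this] show ?thesis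
    by simp
qed

lemma nonrep_colouring_P4_ne:
  assumes "simple_graph V E" "nonrep_colouring V E c"
    and "E a b" "E b d" "E d e" "distinct [a, b, d, e]" "c a = c d"
  shows "c b \<noteq> c e"
proof -
  have "graph_path V E ([a, b] @ [d, e])"
    unfolding graph_path_def
  proof (intro conjI allI impI)
    fix i
    assume "i + 1 < length ([a, b] @ [d, e])"
    then have "i = 0 \<or> i = 1 \<or> i = 2"
      by auto
    then show "E (([a, b] @ [d, e]) ! i) (([a, b] @ [d, e]) ! (i + 1))"
      using assms by auto
  qed (use assms in \<open>auto simp: simple_graph_def\<close>)
  from nonrep_colouring_no_square_path[OF assms(2) this] assms(7) show ?thesis
    by simp
qed

lemma colour_in_palette_of_four:
  assumes "finite V" "card (c ` V) \<le> 4" "{u, v, w, x} \<subseteq> V"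
    and "distinct [c u, c v, c w, c x]" "y \<in> V"
  shows "c y \<in> {c u, c v, c w, c x}"
proof -
  have "{c u, c v, c w, c x} = c ` V"
    using assms(1-4) by (intro card_seteq) auto
  then show ?thesis
    using assms(5) by blast
qed

definition tri_heptagon_edges :: "(nat \<times> nat) set" where
  "tri_heptagon_edges = {(0,1), (1,2), (2,3), (3,4), (4,5), (5,6), (0,6), (0,2), (2,6), (3,6), (3,5)}"

definition tri_heptagon_adj :: "nat \<Rightarrow> nat \<Rightarrow> bool" where
  "tri_heptagon_adj u v \<longleftrightarrow> (u, v) \<in> tri_heptagon_edges \<or> (v, u) \<in> tri_heptagon_edges"

lemma simple_graph_tri_heptagon: "simple_graph {0..6} tri_heptagon_adj"
  unfolding simple_graph_def tri_heptagon_adj_def tri_heptagon_edges_def by auto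

lemma outerplanar_tri_heptagon: "outerplanar {0..6} tri_heptagon_adj"
  using simple_graph_tri_heptagon
  by (rule outerplanar_if_noncrossing) (auto simp: tri_heptagon_adj_def tri_heptagon_edges_def)

lemma nonrep_colouring_tri_heptagon_card_ge_5:
  assumes nonrep: "nonrep_colouring {0..6} tri_heptagon_adj c"
  shows "card (c ` {0..6}) \<ge> 5"
proof (rule ccontr)
  assume "\<not> card (c ` {0..6}) \<ge> 5"
  then have palette: "c y \<in> {c u, c v, c w, c x}"
    if "{u, v, w, x} \<subseteq> {0..6}" "distinct [c u, c v, c w, c x]" "y \<le> 6" for u v w x y
    using that by (intro colour_in_palette_of_four[where V = "{0..6}"]) auto
  have adj: "c u \<noteq> c v" if "tri_heptagon_adj u v" for u v
    using nonrep_colouring_proper[OF simple_graph_tri_heptagon nonrep that] .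
  have P4: "c b \<noteq> c e"
    if "tri_heptagon_adj a b" "tri_heptagon_adj b d" "tri_heptagon_adj d e"
      "distinct [a, b, d, e]" "c a = c d" for a b d e
    using nonrep_colouring_P4_ne[OF simple_graph_tri_heptagon nonrep that] .
  note edges = tri_heptagon_adj_def tri_heptagon_edges_def
  have "distinct [c 0, c 1, c 2]" "c 6 \<noteq> c 0" "c 6 \<noteq> c 2"
    using adj by (auto simp: edges)
  then consider "c 6 = c 1" | "distinct [c 0, c 1, c 2, c 6]"
    by (cases "c 6 = c 1") auto
  then show False
  proof cases
    case 1
    have "c 5 \<noteq> c 2" "c 5 \<noteq> c 0"
      using P4[of 1 2 6 5] P4[of 1 0 6 5] 1 by (auto simp: edges)
    moreover have "c 5 \<noteq> c 1"
      using adj[of 5 6] 1 by (auto simp: edges)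
    ultimately have distinct4: "distinct [c 0, c 1, c 2, c 5]"
      using \<open>distinct [c 0, c 1, c 2]\<close> by auto
    have "c 3 = c 0"
      using palette[OF _ distinct4, of 3] adj[of 2 3] adj[of 3 6] adj[of 3 5] 1 by (auto simp: edges)
    then have "c 4 \<noteq> c 2" "c 4 \<noteq> c 6"
      using P4[of 0 2 3 4] P4[of 0 6 3 4] by (auto simp: edges)
    then show False
      using palette[OF _ distinct4, of 4] adj[of 3 4] adj[of 4 5] 1 \<open>c 3 = c 0\<close> by (auto simp: edges)
  next
    case 2
    have "c 3 = c 0 \<or> c 3 = c 1"
      using palette[OF _ 2, of 3] adj[of 2 3] adj[of 3 6] by (auto simp: edges)
    then show False
    proof
      assume "c 3 = c 0"
      then have "c 5 \<noteq> c 2" "c 4 \<noteq> c 2" "c 4 \<noteq> c 6"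
        using P4[of 0 2 3 5] P4[of 0 2 3 4] P4[of 0 6 3 4] by (auto simp: edges)
      then have "c 5 = c 1"
        using palette[OF _ 2, of 5] adj[of 3 5] adj[of 5 6] \<open>c 3 = c 0\<close> by (auto simp: edges)
      then show False
        using palette[OF _ 2, of 4] adj[of 3 4] adj[of 4 5] \<open>c 3 = c 0\<close> \<open>c 4 \<noteq> c 2\<close> \<open>c 4 \<noteq> c 6\<close>
        by (auto simp: edges)
    next
      assume "c 3 = c 1"
      then have "c 5 \<noteq> c 2" "c 4 \<noteq> c 2"
        using P4[of 1 2 3 5] P4[of 1 2 3 4] by (auto simp: edges)
      then have "c 5 = c 0"
        using palette[OF _ 2, of 5] adj[of 3 5] adj[of 5 6] \<open>c 3 = c 1\<close> by (auto simp: edges)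
      then have "c 4 \<noteq> c 6"
        using P4[of 0 6 5 4] by (auto simp: edges)
      then show False
        using palette[OF _ 2, of 4] adj[of 3 4] adj[of 4 5] \<open>c 3 = c 1\<close> \<open>c 5 = c 0\<close> \<open>c 4 \<noteq> c 2\<close>
        by (auto simp: edges)
    qed
  qed
qed

theorem theorem2:
  shows "\<exists>(V :: nat set) E. finite V \<and> simple_graph V E \<and> outerplanar V E \<and>
           (\<forall>c :: nat \<Rightarrow> nat. nonrep_colouring V E c \<longrightarrow> card (c ` V) \<ge> 5)"
  using simple_graph_tri_heptagon outerplanar_tri_heptagon nonrep_colouring_tri_heptagon_card_ge_5
  by blast

end
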